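(* Let $(A_1,A_2,A_3)$ take values in $\{0,1\}^3$ with a palindromic distribution $p$ (i.e. $p(a)=p(\sim a)$ for all $a$) with $p(a)>0$ for all $a$. Let $\lambda_{12}=2^{-3}\sum_{a\in\{0,1\}^3}(-1)^{a_1+a_2}\log p(a)$ be the two-factor log-linear interaction of $A_1,A_2$; let $\rho_{12|3}$ be the correlation of $A_1$ and $A_2$ in the conditional distribution given $A_3=0$ (which equals the conditional correlation given $A_3=1$); let $\rho_{st}$ denote the marginal Pearson correlation of $A_s,A_t$ and $\rho_{12.3}=(\rho_{12}-\rho_{13}\rho_{23})/\{(1-\rho_{13}^2)(1-\rho_{23}^2)\}^{1/2}$ the partial correlation. Then (i) $A_1\perp\!\!\!\perp A_2\mid A_3 \iff \lambda_{12}=0\iff \rho_{12|3}=0\iff\rho_{12.3}=0$; (ii) the conditional dependence of $A_1,A_2$ given $A_3$ is positive $\iff\lambda_{12}>0\iff\rho_{12|3}>0\iff\rho_{12.3}>0$; (iii) the conditional dependence of $A_1,A_2$ given $A_3$ is negative $\iff\lambda_{12}<0\iff\rho_{12|3}<0\iff\rho_{12.3}<0$.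
   Context: $\sim a$ denotes the complement of the binary vector $a$. A conditional dependence of $A_1,A_2$ given $A_3$ is called positive (negative) if the conditional correlation $\rho_{12|3}$ is positive (negative), equivalently if the conditional odds-ratio is $>1$ ($<1$). *)

theory Defs
  imports Complex_Main
begin

text \<open>A distribution of (A1,A2,A3) on {0,1}^3 is a function p :: nat => nat => nat => real,
  only its values on {0,1}^3 matter.\<close>

definition bin :: "nat set" where "bin = {0, 1}"

definition is_dist3 :: "(nat \<Rightarrow> nat \<Rightarrow> nat \<Rightarrow> real) \<Rightarrow> bool" where
  "is_dist3 p \<longleftrightarrow> (\<forall>a1\<in>bin. \<forall>a2\<in>bin. \<forall>a3\<in>bin. p a1 a2 a3 \<ge> 0)
     \<and> (\<Sum>a1\<in>bin. \<Sum>a2\<in>bin. \<Sum>a3\<in>bin. p a1 a2 a3) = 1"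

definition palindromic :: "(nat \<Rightarrow> nat \<Rightarrow> nat \<Rightarrow> real) \<Rightarrow> bool" where
  "palindromic p \<longleftrightarrow> (\<forall>a1\<in>bin. \<forall>a2\<in>bin. \<forall>a3\<in>bin. p a1 a2 a3 = p (1 - a1) (1 - a2) (1 - a3))"

definition bcorr :: "(nat \<Rightarrow> nat \<Rightarrow> real) \<Rightarrow> real" where
  "bcorr r = (let mx = r 1 0 + r 1 1; my = r 0 1 + r 1 1
              in (r 1 1 - mx * my) / sqrt (mx * (1 - mx) * my * (1 - my)))"

definition lambda12 :: "(nat \<Rightarrow> nat \<Rightarrow> nat \<Rightarrow> real) \<Rightarrow> real" where
  "lambda12 p = (1 / 2^3) * (\<Sum>a1\<in>bin. \<Sum>a2\<in>bin. \<Sum>a3\<in>bin.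
      (-1) ^ (a1 + a2) * ln (p a1 a2 a3))"

definition cond12 :: "(nat \<Rightarrow> nat \<Rightarrow> nat \<Rightarrow> real) \<Rightarrow> nat \<Rightarrow> nat \<Rightarrow> nat \<Rightarrow> real" where
  "cond12 p c a1 a2 = p a1 a2 c / (\<Sum>b1\<in>bin. \<Sum>b2\<in>bin. p b1 b2 c)"

definition rho12_3cond :: "(nat \<Rightarrow> nat \<Rightarrow> nat \<Rightarrow> real) \<Rightarrow> real" where
  "rho12_3cond p = bcorr (cond12 p 0)"

definition marg12 :: "(nat \<Rightarrow> nat \<Rightarrow> nat \<Rightarrow> real) \<Rightarrow> nat \<Rightarrow> nat \<Rightarrow> real" where
  "marg12 p x y = (\<Sum>c\<in>bin. p x y c)"
definition marg13 :: "(nat \<Rightarrow> nat \<Rightarrow> nat \<Rightarrow> real) \<Rightarrow> nat \<Rightarrow> nat \<Rightarrow> real" where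
  "marg13 p x z = (\<Sum>b\<in>bin. p x b z)"
definition marg23 :: "(nat \<Rightarrow> nat \<Rightarrow> nat \<Rightarrow> real) \<Rightarrow> nat \<Rightarrow> nat \<Rightarrow> real" where
  "marg23 p y z = (\<Sum>a\<in>bin. p a y z)"

definition partial_corr :: "(nat \<Rightarrow> nat \<Rightarrow> nat \<Rightarrow> real) \<Rightarrow> real" where
  "partial_corr p = (let r12 = bcorr (marg12 p); r13 = bcorr (marg13 p); r23 = bcorr (marg23 p)
     in (r12 - r13 * r23) / sqrt ((1 - r13^2) * (1 - r23^2)))"

definition cond_indep12_3 :: "(nat \<Rightarrow> nat \<Rightarrow> nat \<Rightarrow> real) \<Rightarrow> bool" where
  "cond_indep12_3 p \<longleftrightarrow> (\<forall>a1\<in>bin. \<forall>a2\<in>bin. \<forall>a3\<in>bin.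
     p a1 a2 a3 * (\<Sum>b1\<in>bin. \<Sum>b2\<in>bin. p b1 b2 a3)
       = (\<Sum>b2\<in>bin. p a1 b2 a3) * (\<Sum>b1\<in>bin. p b1 a2 a3))"

definition cond_odds_ratio :: "(nat \<Rightarrow> nat \<Rightarrow> nat \<Rightarrow> real) \<Rightarrow> nat \<Rightarrow> real" where
  "cond_odds_ratio p c = (p 1 1 c * p 0 0 c) / (p 1 0 c * p 0 1 c)"

definition cond_dep_positive :: "(nat \<Rightarrow> nat \<Rightarrow> nat \<Rightarrow> real) \<Rightarrow> bool" where
  "cond_dep_positive p \<longleftrightarrow> (\<forall>c\<in>bin. cond_odds_ratio p c > 1)"
definition cond_dep_negative :: "(nat \<Rightarrow> nat \<Rightarrow> nat \<Rightarrow> real) \<Rightarrow> bool" where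
  "cond_dep_negative p \<longleftrightarrow> (\<forall>c\<in>bin. cond_odds_ratio p c < 1)"

end

theory Submission
  imports Defs
begin

text \<open>A palindromic distribution is determined by the four values a = p000, b = p001 = p110,
  c = p010, d = p100, subject to a + b + c + d = 1/2, and all its univariate margins are 1/2.
  Every quantity in the theorem then has the sign of the cross difference ab - cd of the
  conditional table given A3 = 0: the log-linear interaction is a mean of the two conditional
  log odds ratios, which coincide; the correlation of a 2x2 table has the sign of its cross
  difference; and with margins 1/2 the marginal correlations are 4m - 1 for the cell masses m,
  so that the numerator of the partial correlation equals 16(ab - cd).\<close>

(* Keeps the cell index 1 :: nat from being rewritten to Suc 0, so that cell identities
   such as palindromic_values remain usable as rewrite rules. *)
declare One_nat_def [simp del]

definition cond_cross_diff :: "(nat \<Rightarrow> nat \<Rightarrow> nat \<Rightarrow> real) \<Rightarrow> nat \<Rightarrow> real" where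
  "cond_cross_diff p c = p 0 0 c * p 1 1 c - p 0 1 c * p 1 0 c"

lemma sum_bin: "(\<Sum>x\<in>bin. f x) = f 0 + f 1"
  by (simp add: bin_def)

lemma ball_bin: "(\<forall>x\<in>bin. P x) \<longleftrightarrow> P 0 \<and> P 1"
  by (auto simp: bin_def)

lemma sgn_ln: "(x::real) > 0 \<Longrightarrow> sgn (ln x) = sgn (x - 1)"
  by (rule linorder_cases [of x 1]) (simp_all add: sgn_if)

lemma sgn_eq_imp_same_sign:
  fixes x y :: "'a :: linordered_idom"
  assumes "sgn x = sgn y"
  shows "(x = 0 \<longleftrightarrow> y = 0) \<and> (x > 0 \<longleftrightarrow> y > 0) \<and> (x < 0 \<longleftrightarrow> y < 0)"
  by (metis assms sgn_0_0 sgn_greater sgn_less)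

lemma bcorr_eq_cross_diff:
  assumes "r 0 0 + r 0 1 + r 1 0 + r 1 1 = 1"
  shows "bcorr r = (r 0 0 * r 1 1 - r 0 1 * r 1 0) /
    sqrt ((r 1 0 + r 1 1) * (1 - (r 1 0 + r 1 1)) * (r 0 1 + r 1 1) * (1 - (r 0 1 + r 1 1)))"
proof -
  have "r 1 1 - (r 1 0 + r 1 1) * (r 0 1 + r 1 1)
      = r 1 1 * (r 0 0 + r 0 1 + r 1 0 + r 1 1) - (r 1 0 + r 1 1) * (r 0 1 + r 1 1)"
    using assms by simp
  also have "\<dots> = r 0 0 * r 1 1 - r 0 1 * r 1 0"
    by (simp add: algebra_simps)
  finally show ?thesis
    unfolding bcorr_def Let_def by simp
qed

lemma sgn_bcorr:
  assumes "r 0 0 + r 0 1 + r 1 0 + r 1 1 = 1"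
    and "r 0 0 > 0" "r 0 1 > 0" "r 1 0 > 0" "r 1 1 > 0"
  shows "sgn (bcorr r) = sgn (r 0 0 * r 1 1 - r 0 1 * r 1 0)"
proof -
  have "1 - (r 1 0 + r 1 1) = r 0 0 + r 0 1" "1 - (r 0 1 + r 1 1) = r 0 0 + r 1 0"
    using assms(1) by linarith+
  then have "sqrt ((r 1 0 + r 1 1) * (1 - (r 1 0 + r 1 1)) * (r 0 1 + r 1 1) * (1 - (r 0 1 + r 1 1))) > 0"
    using assms(2-) by simp
  then show ?thesis
    by (simp add: bcorr_eq_cross_diff[OF assms(1)])
qed

lemma bcorr_flip:
  assumes flip: "\<forall>x\<in>bin. \<forall>y\<in>bin. s x y = r (1 - x) (1 - y)"
    and sum: "r 0 0 + r 0 1 + r 1 0 + r 1 1 = 1"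
  shows "bcorr s = bcorr r"
proof -
  have s: "s 1 0 = r 0 1" "s 1 1 = r 0 0" "s 0 1 = r 1 0"
    using flip by (auto simp: bin_def)
  have mx: "s 1 0 + s 1 1 = 1 - (r 1 0 + r 1 1)" and my: "s 0 1 + s 1 1 = 1 - (r 0 1 + r 1 1)"
    using sum s by linarith+
  have "r 0 0 = 1 - r 0 1 - r 1 0 - r 1 1"
    using sum by linarith
  then have num: "s 1 1 - (1 - (r 1 0 + r 1 1)) * (1 - (r 0 1 + r 1 1))
      = r 1 1 - (r 1 0 + r 1 1) * (r 0 1 + r 1 1)"
    by (simp add: s algebra_simps)
  have den: "(1 - (r 1 0 + r 1 1)) * (1 - (1 - (r 1 0 + r 1 1))) * (1 - (r 0 1 + r 1 1)) *
      (1 - (1 - (r 0 1 + r 1 1)))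
    = (r 1 0 + r 1 1) * (1 - (r 1 0 + r 1 1)) * (r 0 1 + r 1 1) * (1 - (r 0 1 + r 1 1))"
    by (simp add: algebra_simps)
  show ?thesis
    by (simp only: bcorr_def Let_def mx my num den)
qed

lemma bcorr_half_margins:
  assumes "r 1 0 + r 1 1 = 1/2" "r 0 1 + r 1 1 = 1/2"
  shows "bcorr r = 4 * r 1 1 - 1"
proof -
  have "sqrt (1/16) = (1/4::real)"
    by (simp add: real_sqrt_divide)
  then show ?thesis
    unfolding bcorr_def Let_def assms by (simp add: field_simps)
qed

lemma sgn_bcorr_cond12:
  assumes pos: "\<forall>a1\<in>bin. \<forall>a2\<in>bin. p a1 a2 c > 0"
  shows "sgn (bcorr (cond12 p c)) = sgn (cond_cross_diff p c)"
proof -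
  define s where "s = p 0 0 c + p 0 1 c + p 1 0 c + p 1 1 c"
  have cells: "p 0 0 c > 0" "p 0 1 c > 0" "p 1 0 c > 0" "p 1 1 c > 0"
    using pos by (auto simp: bin_def)
  then have "s > 0"
    by (simp add: s_def)
  have cond: "cond12 p c x y = p x y c / s" for x y
    by (simp add: cond12_def sum_bin s_def add.assoc)
  have "sgn (bcorr (cond12 p c)) = sgn (cond_cross_diff p c / s\<^sup>2)"
  proof (subst sgn_bcorr)
    show "cond12 p c 0 0 + cond12 p c 0 1 + cond12 p c 1 0 + cond12 p c 1 1 = 1"
      using \<open>s > 0\<close> by (simp add: cond add_divide_distrib [symmetric] s_def)
  qed (use cells \<open>s > 0\<close> in \<open>simp_all add: cond cond_cross_diff_def power2_eq_square diff_divide_distrib\<close>)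
  then show ?thesis
    using \<open>s > 0\<close> by simp
qed

lemma sgn_cond_odds_ratio:
  assumes "p 1 0 c > 0" "p 0 1 c > 0"
  shows "sgn (cond_odds_ratio p c - 1) = sgn (cond_cross_diff p c)"
proof -
  have "cond_odds_ratio p c - 1 = cond_cross_diff p c / (p 1 0 c * p 0 1 c)"
    using assms by (simp add: cond_odds_ratio_def cond_cross_diff_def field_simps)
  then show ?thesis
    using assms by (simp add: sgn_mult)
qed

lemma lambda12_eq_ln_cond_odds_ratios:
  assumes pos: "\<forall>a1\<in>bin. \<forall>a2\<in>bin. \<forall>a3\<in>bin. p a1 a2 a3 > 0"
  shows "lambda12 p = (ln (cond_odds_ratio p 0) + ln (cond_odds_ratio p 1)) / 8"
  using pos by (simp add: lambda12_def cond_odds_ratio_def sum_bin ball_bin ln_mult ln_div)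

lemma cond_indep12_3_iff_cross_diff:
  "cond_indep12_3 p \<longleftrightarrow> (\<forall>c\<in>bin. cond_cross_diff p c = 0)"
  unfolding cond_indep12_3_def cond_cross_diff_def sum_bin ball_bin
  by (auto simp: algebra_simps)

lemma palindromic_values:
  assumes "palindromic p"
  shows "p 1 1 1 = p 0 0 0" "p 1 1 0 = p 0 0 1" "p 1 0 1 = p 0 1 0" "p 0 1 1 = p 1 0 0"
  using assms unfolding palindromic_def ball_bin diff_self_eq_0 diff_zero by blast+

lemma palindromic_cond_cross_diff:
  "palindromic p \<Longrightarrow> cond_cross_diff p 1 = cond_cross_diff p 0"
  by (simp add: cond_cross_diff_def palindromic_values [of p])

lemma palindromic_cond_odds_ratio:
  "palindromic p \<Longrightarrow> cond_odds_ratio p 1 = cond_odds_ratio p 0"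
  by (simp add: cond_odds_ratio_def palindromic_values [of p] ac_simps)

lemma palindromic_bcorr_cond12:
  assumes pal: "palindromic p" and pos: "\<forall>a1\<in>bin. \<forall>a2\<in>bin. p a1 a2 0 > 0"
  shows "bcorr (cond12 p 1) = bcorr (cond12 p 0)"
proof (rule bcorr_flip)
  show "\<forall>x\<in>bin. \<forall>y\<in>bin. cond12 p 1 x y = cond12 p 0 (1 - x) (1 - y)"
    by (simp add: cond12_def ball_bin sum_bin palindromic_values [OF pal] algebra_simps)
  show "cond12 p 0 0 0 + cond12 p 0 0 1 + cond12 p 0 1 0 + cond12 p 0 1 1 = 1"
    using pos by (simp add: cond12_def sum_bin ball_bin add_divide_distrib [symmetric] add.assoc)
qed

lemma palindromic_mass_half:
  assumes "is_dist3 p" "palindromic p"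
  shows "p 0 0 0 + p 0 0 1 + p 0 1 0 + p 1 0 0 = 1/2"
  using assms(1) by (simp add: is_dist3_def sum_bin palindromic_values [OF assms(2)])

lemma sgn_partial_corr_palindromic:
  assumes dist: "is_dist3 p"
    and pos: "\<forall>a1\<in>bin. \<forall>a2\<in>bin. \<forall>a3\<in>bin. p a1 a2 a3 > 0"
    and pal: "palindromic p"
  shows "sgn (partial_corr p) = sgn (cond_cross_diff p 0)"
proof -
  define a where "a = p 0 0 0"
  define b where "b = p 0 0 1"
  define c where "c = p 0 1 0"
  define d where "d = p 1 0 0"
  note vals = palindromic_values[OF pal, folded a_def b_def c_def d_def]
  have half: "a + b + c + d = 1/2"
    using palindromic_mass_half[OF dist pal] by (simp add: a_def b_def c_def d_def)
  then have d_eq: "d = 1/2 - a - b - c"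
    by simp
  have "a > 0" "b > 0" "c > 0" "d > 0"
    using pos by (auto simp: ball_bin a_def b_def c_def d_def)
  have r12: "bcorr (marg12 p) = 4 * (a + b) - 1"
    using half
    by (subst bcorr_half_margins) (simp_all add: marg12_def sum_bin vals a_def b_def c_def d_def)
  have r13: "bcorr (marg13 p) = 4 * (a + c) - 1"
    using half
    by (subst bcorr_half_margins) (simp_all add: marg13_def sum_bin vals a_def b_def c_def d_def)
  have r23: "bcorr (marg23 p) = 4 * (a + d) - 1"
    using half
    by (subst bcorr_half_margins) (simp_all add: marg23_def sum_bin vals a_def b_def c_def d_def)
  have factor_pos: "1 - (4 * m - 1)\<^sup>2 > 0" if "0 < m" "m < 1/2" for m :: real
  proof -
    have "1 - (4 * m - 1)\<^sup>2 = 8 * m * (1 - 2 * m)"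
      by (simp add: power2_eq_square algebra_simps)
    then show ?thesis
      using that by simp
  qed
  have denom: "sqrt ((1 - (4 * (a + c) - 1)\<^sup>2) * (1 - (4 * (a + d) - 1)\<^sup>2)) > 0"
    using half \<open>a > 0\<close> \<open>b > 0\<close> \<open>c > 0\<close> \<open>d > 0\<close>
    by (intro real_sqrt_gt_zero mult_pos_pos factor_pos) auto
  have "cond_cross_diff p 0 = a * b - c * d"
    by (simp add: cond_cross_diff_def vals a_def b_def c_def d_def)
  then have "(4 * (a + b) - 1) - (4 * (a + c) - 1) * (4 * (a + d) - 1) = 16 * cond_cross_diff p 0"
    by (simp add: d_eq algebra_simps)
  then show ?thesis
    unfolding partial_corr_def Let_def r12 r13 r23 using denom by (simp add: sgn_mult)
qed

theorem proposition3p1: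
  fixes p :: "nat \<Rightarrow> nat \<Rightarrow> nat \<Rightarrow> real"
  assumes dist: "is_dist3 p"
    and pos: "\<forall>a1\<in>bin. \<forall>a2\<in>bin. \<forall>a3\<in>bin. p a1 a2 a3 > 0"
    and pal: "palindromic p"
  shows "(cond_indep12_3 p \<longleftrightarrow> lambda12 p = 0)
       \<and> (lambda12 p = 0 \<longleftrightarrow> rho12_3cond p = 0)
       \<and> (rho12_3cond p = 0 \<longleftrightarrow> partial_corr p = 0)
       \<and> (cond_dep_positive p \<longleftrightarrow> lambda12 p > 0)
       \<and> (lambda12 p > 0 \<longleftrightarrow> rho12_3cond p > 0)
       \<and> (rho12_3cond p > 0 \<longleftrightarrow> partial_corr p > 0)
       \<and> (cond_dep_negative p \<longleftrightarrow> lambda12 p < 0)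
       \<and> (lambda12 p < 0 \<longleftrightarrow> rho12_3cond p < 0)
       \<and> (rho12_3cond p < 0 \<longleftrightarrow> partial_corr p < 0)
       \<and> bcorr (cond12 p 1) = rho12_3cond p"
proof -
  define D where "D = cond_cross_diff p 0"
  have pos0: "\<forall>a1\<in>bin. \<forall>a2\<in>bin. p a1 a2 0 > 0"
    using pos by (simp add: ball_bin)
  have odds: "cond_odds_ratio p 1 = cond_odds_ratio p 0"
    using pal by (rule palindromic_cond_odds_ratio)
  have odds_pos: "cond_odds_ratio p 0 > 0"
    using pos by (simp add: cond_odds_ratio_def ball_bin)
  have odds_sign: "sgn (cond_odds_ratio p 0 - 1) = sgn D"
    using pos by (simp add: D_def sgn_cond_odds_ratio ball_bin)
  have indep: "cond_indep12_3 p \<longleftrightarrow> D = 0"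
    by (simp add: cond_indep12_3_iff_cross_diff ball_bin palindromic_cond_cross_diff [OF pal] D_def)
  have "sgn (lambda12 p) = sgn D"
    using odds_sign
    by (simp add: lambda12_eq_ln_cond_odds_ratios [OF pos] odds sgn_ln [OF odds_pos])
  moreover have "sgn (rho12_3cond p) = sgn D"
    by (simp add: rho12_3cond_def D_def sgn_bcorr_cond12 [of p 0, OF pos0])
  moreover have "sgn (partial_corr p) = sgn D"
    unfolding D_def using dist pos pal by (rule sgn_partial_corr_palindromic)
  moreover have "bcorr (cond12 p 1) = rho12_3cond p"
    by (simp add: rho12_3cond_def palindromic_bcorr_cond12 [OF pal pos0])
  ultimately show ?thesis
    using sgn_eq_imp_same_sign [OF odds_sign] indep
    by (auto simp: cond_dep_positive_def cond_dep_negative_def ball_bin odds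
        dest!: sgn_eq_imp_same_sign)
qed

end
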